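(* (1) Let $C\otimes\mathbb Q=\{t^r\mid r\in\mathbb Q\}$ denote the additive group $\mathbb Q$ written multiplicatively. Make $\mathbb Q[\![x]\!]$ a $C\otimes\mathbb Q$-module by letting $t^r$ act as multiplication by $(1+x)^r=\sum_{n\ge 0}\binom{r}{n}x^n$, where $\binom{r}{n}=r(r-1)\cdots(r-n+1)/n!$. Let $\Lambda^2(\mathbb Q[\![x]\!])$ be the exterior square over $\mathbb Q$ with the diagonal action $t^r(f\wedge g)=(1+x)^rf\wedge(1+x)^rg$, and let $(\Lambda^2(\mathbb Q[\![x]\!]))_{C\otimes\mathbb Q}$ be its module of coinvariants. Then the kernel of the $\mathbb Q$-linear map $\theta_{\mathbb Q}:\mathbb Q[\![x]\!]\to(\Lambda^2(\mathbb Q[\![x]\!]))_{C\otimes\mathbb Q}$, $\theta_{\mathbb Q}(f)=f\wedge 1$, is countable. (2) Let $p$ be an odd prime and $C=\langle t\rangle$ the infinite cyclic group. Make $\mathbb Z/p[\![x]\!]$ a $C$-module by letting $t$ act as multiplication by $1+x$. Let $\Lambda^2(\mathbb Z/p[\![x]\!])$ be the exterior square over $\mathbb Z/p$ with the diagonal action of $C$, and $(\Lambda^2(\mathbb Z/p[\![x]\!]))_C$ its coinvariants. Then the kernel of the map $\theta_{\mathbb Z/p}:\mathbb Z/p[\![x]\!]\to(\Lambda^2(\mathbb Z/p[\![x]\!]))_C$, $\theta_{\mathbb Z/p}(f)=f\wedge 1$, is countable.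
   Context: For a group $H$ acting on a module $M$, the coinvariants $M_H$ are the quotient of $M$ by the subgroup generated by $hm-m$, $h\in H$, $m\in M$. *)

theory Defs
  imports "HOL-Computational_Algebra.Formal_Power_Series" "HOL-Library.Countable_Set"
    "Berlekamp_Zassenhaus.Finite_Field"
begin

text \<open>Free 'k-vector space on pairs (a,b) of elements of V, as finitely supported functions;
  delta a b is the basis vector standing for the formal symbol a \<and> b.\<close>
definition delta :: "'v \<Rightarrow> 'v \<Rightarrow> ('v \<times> 'v \<Rightarrow> 'k::zero_neq_one)" where
  "delta a b = (\<lambda>z. if z = (a, b) then 1 else 0)"

inductive_set kspan :: "('a \<Rightarrow> 'k::comm_ring_1) set \<Rightarrow> ('a \<Rightarrow> 'k) set" for S where
  zero: "(\<lambda>_. 0) \<in> kspan S"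
| gen: "u \<in> S \<Longrightarrow> u \<in> kspan S"
| add: "u \<in> kspan S \<Longrightarrow> v \<in> kspan S \<Longrightarrow> (\<lambda>z. u z + v z) \<in> kspan S"
| smult: "u \<in> kspan S \<Longrightarrow> (\<lambda>z. c * u z) \<in> kspan S"

text \<open>Relations defining the exterior square \<Lambda>^2_k(k[[x]]) as a quotient of the free
  vector space: bilinearity and alternation (a \<and> a = 0).\<close>
definition ext2_rels :: "('k::field fps \<times> 'k fps \<Rightarrow> 'k) set" where
  "ext2_rels =
     {(\<lambda>z. delta (a + a') b z - delta a b z - delta a' b z) | a a' b. True}
   \<union> {(\<lambda>z. delta a (b + b') z - delta a b z - delta a b' z) | a b b'. True}
   \<union> {(\<lambda>z. delta (fps_const c * a) b z - c * delta a b z) | c a b. True}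
   \<union> {(\<lambda>z. delta a (fps_const c * b) z - c * delta a b z) | c a b. True}
   \<union> {delta a a | a. True}"

text \<open>Generators h\<cdot>w - w of the coinvariant relations, for the diagonal action of a group H
  acting on k[[x]] by multiplication by the power series in H, with w = a \<and> b.\<close>
definition coinv_rels :: "'k::field fps set \<Rightarrow> ('k fps \<times> 'k fps \<Rightarrow> 'k) set" where
  "coinv_rels H = {(\<lambda>z. delta (h * a) (h * b) z - delta a b z) | h a b. h \<in> H}"

text \<open>Kernel of theta : k[[x]] \<rightarrow> (\<Lambda>^2 k[[x]])_H, f \<mapsto> f \<and> 1: those f whose symbol
  f \<and> 1 lies in the span of the exterior-square relations and the coinvariant relations.\<close>
definition theta_ker :: "'k::field fps set \<Rightarrow> 'k fps set" where
  "theta_ker H = {f. delta f 1 \<in> kspan (ext2_rels \<union> coinv_rels H)}"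

text \<open>The group C \<otimes> Q acting on Q[[x]]: t^r acts as (1+x)^r = fps_binomial r.\<close>
definition CQ_action :: "rat fps set" where
  "CQ_action = range (\<lambda>r::rat. fps_binomial r)"

definition C_action :: "'k::field fps set" where
  "C_action = range (\<lambda>n::int. if 0 \<le> n then (1 + fps_X) ^ nat n
                                else inverse ((1 + fps_X) ^ nat (- n)))"

end

theory Submission
  imports Defs "HOL-Computational_Algebra.Formal_Laurent_Series"
begin

(*
  If f \<and> 1 vanishes in the coinvariants, then B f 1 = 0 for every alternating, bilinear,
  H-invariant form B on k[[x]]. Let K be the subfield of k((x)) generated by k and the rational
  powers of 1 + x; it is countable when k is, and it contains every h in H together with its
  inverse. For f outside K choose K-linear maps \<phi>, \<psi> : k((x)) \<rightarrow> k((x)) with \<phi> 1 = 0,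
  \<phi> f = 1 and \<psi> 1 = 1, and let \<iota> be the substitution x \<mapsto> -x/(1+x), which maps each
  h in H to 1/h. Then B a b = \<phi> a \<cdot> \<psi> (\<iota> b) - \<phi> b \<cdot> \<psi> (\<iota> a) is such a form
  with B f 1 = 1. Hence the kernel of \<theta> lies in the countable field K.
*)

definition lin_ext :: "('k::zero \<Rightarrow> 'b \<Rightarrow> 'b::comm_monoid_add) \<Rightarrow> ('a \<Rightarrow> 'b) \<Rightarrow> ('a \<Rightarrow> 'k) \<Rightarrow> 'b"
  where "lin_ext s B w = (\<Sum>z | w z \<noteq> 0. s (w z) (B z))"

context Modules.module
begin

lemma lin_ext_eq_sum:
  assumes "finite F" "{z. w z \<noteq> 0} \<subseteq> F"
  shows "lin_ext scale B w = (\<Sum>z\<in>F. scale (w z) (B z))"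
  unfolding lin_ext_def by (rule sum.mono_neutral_left) (use assms in auto)

lemma lin_ext_add:
  assumes "finite {z. u z \<noteq> 0}" "finite {z. v z \<noteq> 0}"
  shows "lin_ext scale B (\<lambda>z. u z + v z) = lin_ext scale B u + lin_ext scale B v"
proof -
  let ?F = "{z. u z \<noteq> 0} \<union> {z. v z \<noteq> 0}"
  have F: "finite ?F" using assms by simp
  have "lin_ext scale B (\<lambda>z. u z + v z) = (\<Sum>z\<in>?F. scale (u z + v z) (B z))"
    by (rule lin_ext_eq_sum[OF F]) auto
  also have "\<dots> = lin_ext scale B u + lin_ext scale B v"
    by (simp add: lin_ext_eq_sum[OF F] scale_left_distrib sum.distrib)
  finally show ?thesis .
qed

lemma lin_ext_diff:
  assumes "finite {z. u z \<noteq> 0}" "finite {z. v z \<noteq> 0}"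
  shows "lin_ext scale B (\<lambda>z. u z - v z) = lin_ext scale B u - lin_ext scale B v"
proof -
  let ?F = "{z. u z \<noteq> 0} \<union> {z. v z \<noteq> 0}"
  have F: "finite ?F" using assms by simp
  have "lin_ext scale B (\<lambda>z. u z - v z) = (\<Sum>z\<in>?F. scale (u z - v z) (B z))"
    by (rule lin_ext_eq_sum[OF F]) auto
  also have "\<dots> = lin_ext scale B u - lin_ext scale B v"
    by (simp add: lin_ext_eq_sum[OF F] scale_left_diff_distrib sum_subtractf)
  finally show ?thesis .
qed

lemma lin_ext_smult:
  assumes "finite {z. u z \<noteq> 0}"
  shows "lin_ext scale B (\<lambda>z. c * u z) = scale c (lin_ext scale B u)"
proof -
  have "lin_ext scale B (\<lambda>z. c * u z) = (\<Sum>z | u z \<noteq> 0. scale (c * u z) (B z))"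
    by (rule lin_ext_eq_sum[OF assms]) auto
  then show ?thesis by (simp add: lin_ext_def scale_sum_right)
qed

lemma lin_ext_delta: "lin_ext scale (case_prod B) (delta a b) = B a b"
  by (simp add: lin_ext_eq_sum[of "{(a, b)}"] delta_def)

lemma lin_ext_kspan:
  assumes "w \<in> kspan S" "\<And>r. r \<in> S \<Longrightarrow> finite {z. r z \<noteq> 0} \<and> lin_ext scale B r = 0"
  shows "finite {z. w z \<noteq> 0} \<and> lin_ext scale B w = 0"
  using assms(1)
proof induction
  case (add u v)
  have "{z. u z + v z \<noteq> 0} \<subseteq> {z. u z \<noteq> 0} \<union> {z. v z \<noteq> 0}" by auto
  with add show ?case by (auto simp: lin_ext_add intro: finite_subset)
next
  case (smult u c)
  have "{z. c * u z \<noteq> 0} \<subseteq> {z. u z \<noteq> 0}" by auto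
  with smult show ?case by (auto simp: lin_ext_smult intro: finite_subset)
qed (use assms(2) in \<open>auto simp: lin_ext_def\<close>)

end

lemma finite_support_delta: "finite {z. delta a b z \<noteq> 0}"
  by (rule finite_subset[of _ "{(a, b)}"]) (auto simp: delta_def)

lemma finite_support_diff:
  assumes "finite {z. u z \<noteq> 0}" "finite {z. v z \<noteq> 0}"
  shows "finite {z. (u z :: 'k::ab_group_add) - v z \<noteq> 0}"
  by (rule finite_subset[of _ "{z. u z \<noteq> 0} \<union> {z. v z \<noteq> 0}"]) (use assms in auto)

lemma finite_support_smult:
  assumes "finite {z. u z \<noteq> 0}"
  shows "finite {z. (c :: 'k::mult_zero) * u z \<noteq> 0}"
  by (rule finite_subset[of _ "{z. u z \<noteq> 0}"]) (use assms in auto)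

lemma theta_ker_imp_form_vanishes:
  fixes B :: "'k::field fps \<Rightarrow> 'k fps \<Rightarrow> 'b::ab_group_add"
  assumes "Modules.module s"
    and "\<And>a a' b. B (a + a') b = B a b + B a' b"
    and "\<And>a b b'. B a (b + b') = B a b + B a b'"
    and "\<And>c a b. B (fps_const c * a) b = s c (B a b)"
    and "\<And>c a b. B a (fps_const c * b) = s c (B a b)"
    and "\<And>a. B a a = 0"
    and "\<And>h a b. h \<in> H \<Longrightarrow> B (h * a) (h * b) = B a b"
    and "f \<in> theta_ker H"
  shows "B f 1 = 0"
proof -
  interpret Modules.module s by fact
  have "lin_ext s (case_prod B) r = 0 \<and> finite {z. r z \<noteq> 0}"
    if "r \<in> ext2_rels \<union> coinv_rels H" for r
    using that unfolding ext2_rels_def coinv_rels_def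
    \<comment> \<open>keep the supports in the shape \<open>u z - v z \<noteq> 0\<close> expected by \<open>finite_support_diff\<close>\<close>
    by (auto simp: lin_ext_diff lin_ext_smult lin_ext_delta finite_support_delta
        finite_support_diff finite_support_smult assms(2-7) simp del: right_minus_eq mult_eq_0_iff)
  moreover have "delta f 1 \<in> kspan (ext2_rels \<union> coinv_rels H)"
    using \<open>f \<in> theta_ker H\<close> by (simp add: theta_ker_def)
  ultimately have "lin_ext s (case_prod B) (delta f 1) = 0"
    using lin_ext_kspan by blast
  then show ?thesis by (simp add: lin_ext_delta)
qed

inductive_set subfield_hull :: "'a::field set \<Rightarrow> 'a set" for G where
  gen: "a \<in> G \<Longrightarrow> a \<in> subfield_hull G"
| one: "1 \<in> subfield_hull G"
| add: "a \<in> subfield_hull G \<Longrightarrow> b \<in> subfield_hull G \<Longrightarrow> a + b \<in> subfield_hull G"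
| uminus: "a \<in> subfield_hull G \<Longrightarrow> - a \<in> subfield_hull G"
| mult: "a \<in> subfield_hull G \<Longrightarrow> b \<in> subfield_hull G \<Longrightarrow> a * b \<in> subfield_hull G"
| inverse: "a \<in> subfield_hull G \<Longrightarrow> inverse a \<in> subfield_hull G"

lemma subfield_hull_zero: "0 \<in> subfield_hull G"
  using subfield_hull.add[OF subfield_hull.one subfield_hull.uminus[OF subfield_hull.one]] by simp

lemma subfield_hull_diff: "a \<in> subfield_hull G \<Longrightarrow> b \<in> subfield_hull G \<Longrightarrow> a - b \<in> subfield_hull G"
  by (metis diff_conv_add_uminus subfield_hull.add subfield_hull.uminus)

lemma subfield_hull_divide: "a \<in> subfield_hull G \<Longrightarrow> b \<in> subfield_hull G \<Longrightarrow> a / b \<in> subfield_hull G"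
  by (metis divide_inverse subfield_hull.mult subfield_hull.inverse)

primrec subfield_hull_level :: "'a::field set \<Rightarrow> nat \<Rightarrow> 'a set" where
  "subfield_hull_level G 0 = insert 1 G"
| "subfield_hull_level G (Suc n) =
     (let L = subfield_hull_level G n
      in L \<union> case_prod (+) ` (L \<times> L) \<union> case_prod (*) ` (L \<times> L) \<union> uminus ` L \<union> inverse ` L)"

lemma subfield_hull_level_mono: "n \<le> m \<Longrightarrow> subfield_hull_level G n \<subseteq> subfield_hull_level G m"
  by (rule lift_Suc_mono_le[of "subfield_hull_level G"]) (auto simp: Let_def)

lemma subfield_hull_level_common:
  assumes "a \<in> subfield_hull_level G n" "b \<in> subfield_hull_level G m"
  shows "a \<in> subfield_hull_level G (max n m) \<and> b \<in> subfield_hull_level G (max n m)"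
  using assms subfield_hull_level_mono[of n "max n m" G] subfield_hull_level_mono[of m "max n m" G]
  by auto

lemma subfield_hull_subset_levels: "a \<in> subfield_hull G \<Longrightarrow> \<exists>n. a \<in> subfield_hull_level G n"
proof (induction rule: subfield_hull.induct)
  case (add a b)
  then obtain n where "a \<in> subfield_hull_level G n" "b \<in> subfield_hull_level G n"
    using subfield_hull_level_common by blast
  then show ?case by (intro exI[of _ "Suc n"]) (force simp: Let_def)
next
  case (mult a b)
  then obtain n where "a \<in> subfield_hull_level G n" "b \<in> subfield_hull_level G n"
    using subfield_hull_level_common by blast
  then show ?case by (intro exI[of _ "Suc n"]) (force simp: Let_def)
qed (force simp: Let_def intro: exI[of _ 0] exI[of _ "Suc _"])+

lemma countable_subfield_hull:
  assumes "countable G"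
  shows "countable (subfield_hull G)"
proof -
  have "countable (subfield_hull_level G n)" for n
    by (induction n) (use assms in \<open>auto simp: Let_def\<close>)
  moreover have "subfield_hull G \<subseteq> (\<Union>n. subfield_hull_level G n)"
    using subfield_hull_subset_levels by blast
  ultimately show ?thesis by (meson countable_UN countable_subset countableI_type)
qed

lemma fps_power_eq_power_imp_eq:
  fixes g h :: "'k::field fps"
  assumes "g ^ n = h ^ n" "g $ 0 = 1" "h $ 0 = 1" "of_nat n \<noteq> (0::'k)"
  shows "g = h"
proof -
  have "(g - h) * (\<Sum>i<n. h ^ (n - Suc i) * g ^ i) = 0"
    using assms(1) by (simp flip: power_diff_sumr2)
  moreover have "(\<Sum>i<n. h ^ (n - Suc i) * g ^ i) $ 0 = of_nat n"
    using assms(2,3) by (simp add: fps_sum_nth fps_nth_power_0)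
  ultimately show ?thesis using assms(4) by auto
qed

definition rat_powers_1X :: "'k::field fps set" where
  "rat_powers_1X = {g. g $ 0 = 1 \<and> (\<exists>n m. of_nat n \<noteq> (0::'k) \<and> g ^ n = (1 + fps_X) ^ m)}"

lemma countable_rat_powers_1X:
  "countable (rat_powers_1X :: 'k::field fps set)"
proof -
  let ?R = "\<lambda>n m. {g :: 'k fps. g $ 0 = 1 \<and> of_nat n \<noteq> (0::'k) \<and> g ^ n = (1 + fps_X) ^ m}"
  have "finite (?R n m)" for n m
  proof (cases "?R n m = {}")
    case False
    then obtain g where g: "g \<in> ?R n m" by blast
    then have "?R n m \<subseteq> {g}"
      using fps_power_eq_power_imp_eq[of _ n g] by auto
    then show ?thesis using finite_subset by blast
  qed (simp only: finite.emptyI)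
  then have "countable (\<Union>n. \<Union>m. ?R n m)" by (simp add: countable_finite)
  moreover have "rat_powers_1X \<subseteq> (\<Union>n. \<Union>m. ?R n m)" by (auto simp: rat_powers_1X_def)
  ultimately show ?thesis by (rule countable_subset[rotated])
qed

definition fps_recip_subst :: "'k::field fps \<Rightarrow> 'k fps" where
  "fps_recip_subst b = b oo - (fps_X * inverse (1 + fps_X))"

lemma fps_recip_subst_nth_0 [simp]: "fps_recip_subst b $ 0 = b $ 0"
  by (simp add: fps_recip_subst_def)

lemma fps_recip_subst_add: "fps_recip_subst (a + b) = fps_recip_subst a + fps_recip_subst b"
  by (simp add: fps_recip_subst_def fps_compose_add_distrib)

lemma fps_recip_subst_mult: "fps_recip_subst (a * b) = fps_recip_subst a * fps_recip_subst b"
  by (simp add: fps_recip_subst_def fps_compose_mult_distrib)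

lemma fps_recip_subst_power: "fps_recip_subst (a ^ n) = fps_recip_subst a ^ n"
  by (simp add: fps_recip_subst_def fps_compose_power)

lemma fps_recip_subst_const [simp]: "fps_recip_subst (fps_const c) = fps_const c"
  by (simp add: fps_recip_subst_def)

lemma fps_recip_subst_inverse:
  "a $ 0 \<noteq> 0 \<Longrightarrow> fps_recip_subst (inverse a) = inverse (fps_recip_subst a)"
  by (simp add: fps_recip_subst_def fps_inverse_compose)

lemma fps_recip_subst_1X: "(1 + fps_X) * fps_recip_subst (1 + fps_X :: 'k::field fps) = 1"
proof -
  have "(1 + fps_X) * fps_recip_subst (1 + fps_X :: 'k fps)
      = (1 + fps_X) - fps_X * ((1 + fps_X) * inverse (1 + fps_X))"
    by (simp add: fps_recip_subst_def fps_compose_add_distrib algebra_simps)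
  also have "\<dots> = 1" by (simp add: inverse_mult_eq_1')
  finally show ?thesis .
qed

lemma rat_powers_1X_recip_subst:
  fixes g :: "'k::field fps"
  assumes "g \<in> rat_powers_1X"
  shows "fps_recip_subst g = inverse g"
proof -
  obtain n m where g0: "g $ 0 = 1" and n: "of_nat n \<noteq> (0::'k)" and gn: "g ^ n = (1 + fps_X) ^ m"
    using assms by (auto simp: rat_powers_1X_def)
  have "fps_recip_subst g ^ n = fps_recip_subst (1 + fps_X) ^ m"
    by (simp flip: fps_recip_subst_power add: gn)
  also have "\<dots> = inverse (1 + fps_X) ^ m"
    by (simp only: fps_inverse_unique[OF fps_recip_subst_1X])
  also have "\<dots> = inverse g ^ n"
    by (simp flip: fps_inverse_power add: gn)
  finally show ?thesis
    by (rule fps_power_eq_power_imp_eq) (use n g0 in simp_all)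
qed

definition root_field :: "'k::field fls set" where
  "root_field = subfield_hull (range fls_const \<union> fps_to_fls ` rat_powers_1X)"

lemma countable_root_field:
  assumes "countable (UNIV :: 'k::field set)"
  shows "countable (root_field :: 'k fls set)"
  unfolding root_field_def
  by (intro countable_subfield_hull countable_Un countable_image countable_rat_powers_1X assms)

lemma fls_const_in_root_field: "fls_const c \<in> root_field"
  by (auto simp: root_field_def intro: subfield_hull.gen)

lemma rat_powers_1X_units_in_root_field:
  assumes "h \<in> rat_powers_1X \<union> inverse ` rat_powers_1X"
  shows "fps_to_fls h \<in> root_field" "fps_to_fls (fps_recip_subst h) \<in> root_field"
    and "fps_to_fls h * fps_to_fls (fps_recip_subst h) = 1"
proof -
  have h: "fps_to_fls h \<in> root_field \<and> h * fps_recip_subst h = 1"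
    using assms
  proof
    assume h: "h \<in> rat_powers_1X"
    then have "h $ 0 = 1" by (simp add: rat_powers_1X_def)
    with h show ?thesis
      by (auto simp: root_field_def rat_powers_1X_recip_subst inverse_mult_eq_1' intro: subfield_hull.gen)
  next
    assume "h \<in> inverse ` rat_powers_1X"
    then obtain g where g: "g \<in> rat_powers_1X" and h: "h = inverse g" by blast
    then have g0: "g $ 0 = 1" by (simp add: rat_powers_1X_def)
    have "fps_to_fls g \<in> root_field"
      using g by (auto simp: root_field_def intro: subfield_hull.gen)
    then have "fps_to_fls h \<in> root_field"
      using g0 by (simp add: h root_field_def subfield_hull.inverse flip: fls_inverse_fps_to_fls)
    moreover have "h * fps_recip_subst h = 1"
      using g g0 by (simp add: h fps_recip_subst_inverse rat_powers_1X_recip_subst inverse_mult_eq_1)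
    ultimately show ?thesis ..
  qed
  then show unit: "fps_to_fls h * fps_to_fls (fps_recip_subst h) = 1"
    by (simp flip: fls_times_fps_to_fls)
  show "fps_to_fls h \<in> root_field" using h ..
  then show "fps_to_fls (fps_recip_subst h) \<in> root_field"
    using subfield_hull.inverse[of "fps_to_fls h"] inverse_unique[OF unit]
    by (simp add: root_field_def)
qed

typedef (overloaded) ('k::field) root_field = "root_field :: 'k fls set"
  by (auto intro: fls_const_in_root_field)

setup_lifting type_definition_root_field

instantiation root_field :: (field) field
begin
lift_definition zero_root_field :: "'a root_field" is 0
  unfolding root_field_def by (rule subfield_hull_zero)
lift_definition one_root_field :: "'a root_field" is 1
  unfolding root_field_def by (rule subfield_hull.one)
lift_definition plus_root_field :: "'a root_field \<Rightarrow> 'a root_field \<Rightarrow> 'a root_field" is "(+)"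
  unfolding root_field_def by (rule subfield_hull.add)
lift_definition minus_root_field :: "'a root_field \<Rightarrow> 'a root_field \<Rightarrow> 'a root_field" is "(-)"
  unfolding root_field_def by (rule subfield_hull_diff)
lift_definition uminus_root_field :: "'a root_field \<Rightarrow> 'a root_field" is uminus
  unfolding root_field_def by (rule subfield_hull.uminus)
lift_definition times_root_field :: "'a root_field \<Rightarrow> 'a root_field \<Rightarrow> 'a root_field" is "(*)"
  unfolding root_field_def by (rule subfield_hull.mult)
lift_definition inverse_root_field :: "'a root_field \<Rightarrow> 'a root_field" is inverse
  unfolding root_field_def by (rule subfield_hull.inverse)
lift_definition divide_root_field :: "'a root_field \<Rightarrow> 'a root_field \<Rightarrow> 'a root_field" is "(/)"
  unfolding root_field_def by (rule subfield_hull_divide)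
instance
  by standard (transfer; simp add: field_simps)+
end

definition root_field_scale :: "'k::field root_field \<Rightarrow> 'k fls \<Rightarrow> 'k fls" where
  "root_field_scale c v = Rep_root_field c * v"

lemma vector_space_root_field_scale: "vector_space root_field_scale"
  by unfold_locales
    (auto simp: root_field_scale_def plus_root_field.rep_eq times_root_field.rep_eq
      one_root_field.rep_eq ring_distribs)

lemma root_field_linear_functional:
  fixes v :: "'k::field fls"
  assumes "v \<notin> root_field"
  obtains \<phi> :: "'k fls \<Rightarrow> 'k fls"
  where "\<And>a b. \<phi> (a + b) = \<phi> a + \<phi> b" "\<And>u a. u \<in> root_field \<Longrightarrow> \<phi> (u * a) = u * \<phi> a"
    and "\<phi> 1 = c" "\<phi> v = d"
proof -
  interpret vector_space_pair root_field_scale root_field_scale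
    by (simp add: vector_space_pair_def vector_space_root_field_scale)
  have "v \<notin> vs1.span {1}"
  proof
    assume "v \<in> vs1.span {1}"
    then obtain k where "v = Rep_root_field k"
      by (auto simp: vs1.span_singleton root_field_scale_def)
    then show False using assms Rep_root_field by auto
  qed
  then have indep: "vs1.independent {v, 1}"
    by (simp add: vs1.independent_insertI vs1.independent_insert)
  have "v \<noteq> 1" using assms subfield_hull.one by (auto simp: root_field_def)
  define \<phi> where "\<phi> = construct {v, 1} (\<lambda>w. if w = v then d else c)"
  interpret \<phi>: Vector_Spaces.linear root_field_scale root_field_scale \<phi>
    unfolding \<phi>_def by (rule linear_construct[OF indep])
  show ?thesis
  proof
    show "\<phi> (a + b) = \<phi> a + \<phi> b" for a b by (rule \<phi>.add)
    show "\<phi> (u * a) = u * \<phi> a" if "u \<in> root_field" for u a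
      using \<phi>.scale[of "Abs_root_field u" a] that
      by (simp add: root_field_scale_def Abs_root_field_inverse)
    show "\<phi> 1 = c" "\<phi> v = d"
      using construct_basis[OF indep] \<open>v \<noteq> 1\<close> by (auto simp: \<phi>_def)
  qed
qed

lemma module_fls_const_mult: "Modules.module (\<lambda>c (u :: 'k::field fls). fls_const c * u)"
  by unfold_locales (simp_all add: algebra_simps flip: fls_plus_const)

lemma theta_ker_subset_root_field:
  fixes H :: "'k::field fps set"
  assumes H: "H \<subseteq> rat_powers_1X \<union> inverse ` rat_powers_1X" and f: "f \<in> theta_ker H"
  shows "fps_to_fls f \<in> root_field"
proof (rule ccontr)
  assume f_notin: "fps_to_fls f \<notin> root_field"
  obtain \<phi> where \<phi>_add: "\<And>a b. \<phi> (a + b) = \<phi> a + \<phi> b"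
    and \<phi>_scale: "\<And>u a. u \<in> root_field \<Longrightarrow> \<phi> (u * a) = u * \<phi> a"
    and "\<phi> 1 = 0" "\<phi> (fps_to_fls f) = 1"
    by (rule root_field_linear_functional[OF f_notin, where c = 0 and d = 1]) blast
  obtain \<psi> where \<psi>_add: "\<And>a b. \<psi> (a + b) = \<psi> a + \<psi> b"
    and \<psi>_scale: "\<And>u a. u \<in> root_field \<Longrightarrow> \<psi> (u * a) = u * \<psi> a"
    and "\<psi> 1 = 1" "\<psi> (fps_to_fls f) = 0"
    by (rule root_field_linear_functional[OF f_notin, where c = 1 and d = 0]) blast
  define \<Phi> where "\<Phi> a = \<phi> (fps_to_fls a)" for a
  define \<Psi> where "\<Psi> a = \<psi> (fps_to_fls (fps_recip_subst a))" for a
  define B where "B a b = \<Phi> a * \<Psi> b - \<Phi> b * \<Psi> a" for a b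
  have const_scale: "\<Phi> (fps_const c * a) = fls_const c * \<Phi> a" "\<Psi> (fps_const c * a) = fls_const c * \<Psi> a"
    for c a
    by (simp_all add: \<Phi>_def \<Psi>_def fps_recip_subst_mult fls_times_fps_to_fls \<phi>_scale \<psi>_scale
        fls_const_in_root_field)
  have unit_scale: "\<Phi> (h * a) = fps_to_fls h * \<Phi> a"
    "\<Psi> (h * a) = fps_to_fls (fps_recip_subst h) * \<Psi> a"
    if "h \<in> H" for h a
    using rat_powers_1X_units_in_root_field(1,2)[of h] that H
    by (auto simp: \<Phi>_def \<Psi>_def fps_recip_subst_mult fls_times_fps_to_fls \<phi>_scale \<psi>_scale)
  have "B f 1 = 0"
  proof (rule theta_ker_imp_form_vanishes[OF module_fls_const_mult _ _ _ _ _ _ f])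
    show "B (a + a') b = B a b + B a' b" "B a (b + b') = B a b + B a b'" for a a' b b'
      by (simp_all add: B_def \<Phi>_def \<Psi>_def fps_recip_subst_add \<phi>_add \<psi>_add algebra_simps)
    show "B (fps_const c * a) b = fls_const c * B a b" "B a (fps_const c * b) = fls_const c * B a b"
      for c a b
      by (simp_all add: B_def const_scale right_diff_distrib mult.left_commute)
    show "B a a = 0" for a by (simp add: B_def)
    show "B (h * a) (h * b) = B a b" if "h \<in> H" for h a b
    proof -
      have "B (h * a) (h * b) = (fps_to_fls h * fps_to_fls (fps_recip_subst h)) * B a b"
        unfolding B_def unit_scale[OF that] by (simp add: algebra_simps)
      then show ?thesis
        using rat_powers_1X_units_in_root_field(3)[of h] that H by auto
    qed
  qed
  moreover have "B f 1 = 1"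
    by (simp add: B_def \<Phi>_def \<Psi>_def \<open>\<phi> 1 = 0\<close> \<open>\<phi> (fps_to_fls f) = 1\<close> \<open>\<psi> 1 = 1\<close>
        fps_recip_subst_def)
  ultimately show False by simp
qed

lemma countable_theta_ker:
  fixes H :: "'k::field fps set"
  assumes "countable (UNIV :: 'k set)" "H \<subseteq> rat_powers_1X \<union> inverse ` rat_powers_1X"
  shows "countable (theta_ker H)"
proof (rule countable_image_inj_on)
  show "countable (fps_to_fls ` theta_ker H)"
    using theta_ker_subset_root_field[OF assms(2)] countable_root_field[OF assms(1)]
    by (blast intro: countable_subset)
  show "inj_on fps_to_fls (theta_ker H)" by (simp add: inj_on_def)
qed

lemma one_plus_X_power_in_rat_powers_1X: "(1 + fps_X) ^ m \<in> rat_powers_1X"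
  unfolding rat_powers_1X_def
  by (simp add: fps_nth_power_0) (metis of_nat_1 one_neq_zero power_one_right)

lemma C_action_subset_rat_powers_1X:
  "(C_action :: 'k::field fps set) \<subseteq> rat_powers_1X \<union> inverse ` rat_powers_1X"
  by (auto simp: C_action_def one_plus_X_power_in_rat_powers_1X)

lemma fps_binomial_in_rat_powers_1X:
  assumes "0 \<le> r"
  shows "fps_binomial (r :: rat) \<in> rat_powers_1X"
proof -
  obtain a b where r: "r = of_int a / of_int b" and "0 < b"
    using quotient_of_denom_pos quotient_of_div by (metis surj_pair)
  with assms have "0 \<le> a" by (simp add: zero_le_divide_iff)
  have "fps_binomial r ^ nat b = (1 + fps_X) ^ nat a"
    using \<open>0 < b\<close> \<open>0 \<le> a\<close> by (simp add: fps_binomial_power r flip: fps_binomial_of_nat)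
  then show ?thesis
    unfolding rat_powers_1X_def using \<open>0 < b\<close>
    by (intro CollectI conjI exI[of _ "nat b"] exI[of _ "nat a"]) simp_all
qed

lemma CQ_action_subset_rat_powers_1X: "CQ_action \<subseteq> rat_powers_1X \<union> inverse ` rat_powers_1X"
proof
  fix h assume "h \<in> CQ_action"
  then obtain r where h: "h = fps_binomial r" by (auto simp: CQ_action_def)
  show "h \<in> rat_powers_1X \<union> inverse ` rat_powers_1X"
  proof (cases "0 \<le> r")
    case False
    have "fps_binomial (- r) * h = 1" by (simp add: h flip: fps_binomial_add_mult)
    then have "h = inverse (fps_binomial (- r))" by (simp add: fps_inverse_unique)
    moreover have "fps_binomial (- r) \<in> rat_powers_1X"
      using False by (intro fps_binomial_in_rat_powers_1X) simp
    ultimately show ?thesis by blast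
  qed (simp add: h fps_binomial_in_rat_powers_1X)
qed

theorem proposition2p1:
  shows "countable (theta_ker CQ_action)
       \<and> (CARD('p::prime_card) \<noteq> 2 \<longrightarrow> countable (theta_ker (C_action :: 'p mod_ring fps set)))"
proof (intro conjI impI)
  \<comment> \<open>the argument works in every characteristic\<close>
  show "countable (theta_ker CQ_action)"
    by (rule countable_theta_ker[OF _ CQ_action_subset_rat_powers_1X]) simp
  show "countable (theta_ker (C_action :: 'p mod_ring fps set))"
    by (rule countable_theta_ker[OF _ C_action_subset_rat_powers_1X]) (simp add: countable_finite)
qed

end
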